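(* In the language $\mathcal{R}\Pi$ described in the context, if $\vdash r : b_1\;R\;b_2$ and $\vdash s : S\,b_1$, then the set obtained by evaluating $r\,\overline{@}\,s$ has type $S\,b_2$, i.e. $\vdash r\,\overline{@}\,s : S\,b_2$.
   Context: Base language $\Pi$: types $b ::= 0\mid 1\mid b+b\mid b\times b\mid \mathit{bool}$ with values $(),\ \mathit{left}\,v,\ \mathit{right}\,v,\ (v,v),\ \mathtt{T},\mathtt{F}$ typed in the usual way ($()$:1, injections into sums, pairs into products, $\mathtt{T},\mathtt{F}:\mathit{bool}$), and reversible combinators $c : b_1\leftrightarrow b_2$ (built from primitive type isomorphisms for unit, commutativity and associativity of $+$ and $\times$, distributivity, $0\times b\leftrightarrow 0$, and $\mathit{bool}\leftrightarrow 1+1$, closed under sequential composition and $\oplus,\otimes$), each acting as a bijection on values: $c\,v\mapsto c(v)$ with $c(v):b_2$ whenever $v:b_1$; in particular $\mathit{uniti}_\times : b\leftrightarrow 1\times b$ maps $v\mapsto((),v)$, $\mathit{swap}_\times$ maps $(v_1,v_2)\mapsto(v_2,v_1)$, etc. $\mathcal{R}\Pi$ extends types with $S\,b$ (sets of values of type $b$) and $b_1\,R\,b_2$ (relations), and values with set terms $s ::= \emptyset \mid \{v\}\mid s\uplus s$ ($\uplus$ is exclusive union: elements occurring in both operands cancel), typed: $\emptyset : S\,b$; $\{v\}:S\,b$ if $v:b$; $s_1\uplus s_2 : S\,b$ if $s_1,s_2:S\,b$. Relations $r ::= \mathit{arr}\,c \mid r\ggg r\mid \mathit{second}\,r\mid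 \mathit{strength}\mid \mathit{state}\,s\mid \eta_b\mid\varepsilon$ typed: $\mathit{arr}\,c : b_1\,R\,b_2$ if $c : b_1\leftrightarrow b_2$; $r_1\ggg r_2 : b_1\,R\,b_3$ if $r_1:b_1\,R\,b_2$, $r_2 : b_2\,R\,b_3$; $\mathit{second}\,r : (b\times b_1)\,R\,(b\times b_2)$ if $r:b_1\,R\,b_2$; $\mathit{state}\,s : 1\,R\,b$ if $s : S\,b$; $\mathit{strength} : (b_1\times S\,b_2)\,R\,(b_1\times b_2)$; $\eta_b : 1\,R\,(b\times b)$; $\varepsilon : (b\times b)\,R\,1$. Evaluation: $r\,\overline{@}\,\emptyset\mapsto\emptyset$; $r\,\overline{@}\,\{v\}\mapsto r\,@\,v$; $r\,\overline{@}\,(s_1\uplus s_2)\mapsto (r\,\overline{@}\,s_1)\uplus(r\,\overline{@}\,s_2)$; and $(\mathit{arr}\,c)\,@\,v\mapsto\{c(v)\}$; $(r_1\ggg r_2)\,@\,v\mapsto r_2\,\overline{@}\,(r_1\,@\,v)$; $(\mathit{second}\,r)\,@\,(v_1,v_2)\mapsto \mathit{strength}\,@\,(v_1, r\,@\,v_2)$; $\mathit{strength}\,@\,(v,\emptyset)\mapsto\emptyset$; $\mathit{strength}\,@\,(v_1,\{v_2\})\mapsto\{(v_1,v_2)\}$; $\mathit{strength}\,@\,(v,s_1\uplus s_2)\mapsto \mathit{strength}\,@\,(v,s_1)\uplus\mathit{strength}\,@\,(v,s_2)$; $(\mathit{state}\,s)\,@\,()\mapsto s$; $\eta_b\,@\,()\mapsto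 \biguplus_i\{(v_i,v_i)\}$ where $v_i$ ranges over all (finitely many) values of type $b$; $\varepsilon\,@\,(v,v)\mapsto\{()\}$; $\varepsilon\,@\,(v,v')\mapsto\emptyset$ if $v\neq v'$. *)

theory Defs
  imports Main
begin

datatype ty = TZero | TOne | TPlus ty ty | TTimes ty ty | TBool | TSet ty

datatype val =
    VUnit
  | VLeft val
  | VRight val
  | VPair val val
  | VT
  | VF
  | SEmpty
  | SSingle val
  | SUnion val val  (* exclusive union s1 \<uplus> s2 *)

inductive vtyp :: "val \<Rightarrow> ty \<Rightarrow> bool" where
  vt_unit:   "vtyp VUnit TOne"
| vt_left:   "vtyp v b1 \<Longrightarrow> vtyp (VLeft v) (TPlus b1 b2)"
| vt_right:  "vtyp v b2 \<Longrightarrow> vtyp (VRight v) (TPlus b1 b2)"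
| vt_pair:   "vtyp v1 b1 \<Longrightarrow> vtyp v2 b2 \<Longrightarrow> vtyp (VPair v1 v2) (TTimes b1 b2)"
| vt_T:      "vtyp VT TBool"
| vt_F:      "vtyp VF TBool"
| vt_empty:  "vtyp SEmpty (TSet b)"
| vt_single: "vtyp v b \<Longrightarrow> vtyp (SSingle v) (TSet b)"
| vt_union:  "vtyp s1 (TSet b) \<Longrightarrow> vtyp s2 (TSet b) \<Longrightarrow> vtyp (SUnion s1 s2) (TSet b)"

datatype comb =
    CId
  | UniteP | UnitiP | SwapP | AssoclP | AssocrP
  | UniteT | UnitiT | SwapT | AssoclT | AssocrT
  | Dist | Factor | Absorb | Factorz
  | BoolTo | BoolFrom
  | CSeq comb comb
  | CPlus comb comb
  | CTimes comb comb

inductive ctyp :: "comb \<Rightarrow> ty \<Rightarrow> ty \<Rightarrow> bool" where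
  ct_id:      "ctyp CId b b"
| ct_uniteP:  "ctyp UniteP (TPlus TZero b) b"
| ct_unitiP:  "ctyp UnitiP b (TPlus TZero b)"
| ct_swapP:   "ctyp SwapP (TPlus b1 b2) (TPlus b2 b1)"
| ct_assoclP: "ctyp AssoclP (TPlus b1 (TPlus b2 b3)) (TPlus (TPlus b1 b2) b3)"
| ct_assocrP: "ctyp AssocrP (TPlus (TPlus b1 b2) b3) (TPlus b1 (TPlus b2 b3))"
| ct_uniteT:  "ctyp UniteT (TTimes TOne b) b"
| ct_unitiT:  "ctyp UnitiT b (TTimes TOne b)"
| ct_swapT:   "ctyp SwapT (TTimes b1 b2) (TTimes b2 b1)"
| ct_assoclT: "ctyp AssoclT (TTimes b1 (TTimes b2 b3)) (TTimes (TTimes b1 b2) b3)"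
| ct_assocrT: "ctyp AssocrT (TTimes (TTimes b1 b2) b3) (TTimes b1 (TTimes b2 b3))"
| ct_dist:    "ctyp Dist (TTimes (TPlus b1 b2) b3) (TPlus (TTimes b1 b3) (TTimes b2 b3))"
| ct_factor:  "ctyp Factor (TPlus (TTimes b1 b3) (TTimes b2 b3)) (TTimes (TPlus b1 b2) b3)"
| ct_absorb:  "ctyp Absorb (TTimes TZero b) TZero"
| ct_factorz: "ctyp Factorz TZero (TTimes TZero b)"
| ct_boolto:  "ctyp BoolTo TBool (TPlus TOne TOne)"
| ct_boolfrom:"ctyp BoolFrom (TPlus TOne TOne) TBool"
| ct_seq:     "ctyp c1 b1 b2 \<Longrightarrow> ctyp c2 b2 b3 \<Longrightarrow> ctyp (CSeq c1 c2) b1 b3"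
| ct_plus:    "ctyp c1 b1 b3 \<Longrightarrow> ctyp c2 b2 b4 \<Longrightarrow> ctyp (CPlus c1 c2) (TPlus b1 b2) (TPlus b3 b4)"
| ct_times:   "ctyp c1 b1 b3 \<Longrightarrow> ctyp c2 b2 b4 \<Longrightarrow> ctyp (CTimes c1 c2) (TTimes b1 b2) (TTimes b3 b4)"

inductive cstep :: "comb \<Rightarrow> val \<Rightarrow> val \<Rightarrow> bool" where
  cs_id:       "cstep CId v v"
| cs_uniteP:   "cstep UniteP (VRight v) v"
| cs_unitiP:   "cstep UnitiP v (VRight v)"
| cs_swapP1:   "cstep SwapP (VLeft v) (VRight v)"
| cs_swapP2:   "cstep SwapP (VRight v) (VLeft v)"
| cs_assoclP1: "cstep AssoclP (VLeft v) (VLeft (VLeft v))"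
| cs_assoclP2: "cstep AssoclP (VRight (VLeft v)) (VLeft (VRight v))"
| cs_assoclP3: "cstep AssoclP (VRight (VRight v)) (VRight v)"
| cs_assocrP1: "cstep AssocrP (VLeft (VLeft v)) (VLeft v)"
| cs_assocrP2: "cstep AssocrP (VLeft (VRight v)) (VRight (VLeft v))"
| cs_assocrP3: "cstep AssocrP (VRight v) (VRight (VRight v))"
| cs_uniteT:   "cstep UniteT (VPair VUnit v) v"
| cs_unitiT:   "cstep UnitiT v (VPair VUnit v)"
| cs_swapT:    "cstep SwapT (VPair v1 v2) (VPair v2 v1)"
| cs_assoclT:  "cstep AssoclT (VPair v1 (VPair v2 v3)) (VPair (VPair v1 v2) v3)"
| cs_assocrT:  "cstep AssocrT (VPair (VPair v1 v2) v3) (VPair v1 (VPair v2 v3))"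
| cs_dist1:    "cstep Dist (VPair (VLeft v1) v3) (VLeft (VPair v1 v3))"
| cs_dist2:    "cstep Dist (VPair (VRight v2) v3) (VRight (VPair v2 v3))"
| cs_factor1:  "cstep Factor (VLeft (VPair v1 v3)) (VPair (VLeft v1) v3)"
| cs_factor2:  "cstep Factor (VRight (VPair v2 v3)) (VPair (VRight v2) v3)"
| cs_boolto1:  "cstep BoolTo VT (VLeft VUnit)"
| cs_boolto2:  "cstep BoolTo VF (VRight VUnit)"
| cs_boolfrom1:"cstep BoolFrom (VLeft VUnit) VT"
| cs_boolfrom2:"cstep BoolFrom (VRight VUnit) VF"
| cs_seq:      "cstep c1 v v1 \<Longrightarrow> cstep c2 v1 v2 \<Longrightarrow> cstep (CSeq c1 c2) v v2"
| cs_plus1:    "cstep c1 v v' \<Longrightarrow> cstep (CPlus c1 c2) (VLeft v) (VLeft v')"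
| cs_plus2:    "cstep c2 v v' \<Longrightarrow> cstep (CPlus c1 c2) (VRight v) (VRight v')"
| cs_times:    "cstep c1 v1 v1' \<Longrightarrow> cstep c2 v2 v2' \<Longrightarrow>
                cstep (CTimes c1 c2) (VPair v1 v2) (VPair v1' v2')"

datatype rel =
    Arr comb
  | RSeq rel rel
  | Second rel
  | Strength
  | State val
  | Eta ty
  | Eps

inductive rtyp :: "rel \<Rightarrow> ty \<Rightarrow> ty \<Rightarrow> bool" where
  rt_arr:      "ctyp c b1 b2 \<Longrightarrow> rtyp (Arr c) b1 b2"
| rt_seq:      "rtyp r1 b1 b2 \<Longrightarrow> rtyp r2 b2 b3 \<Longrightarrow> rtyp (RSeq r1 r2) b1 b3"
| rt_second:   "rtyp r b1 b2 \<Longrightarrow> rtyp (Second r) (TTimes b b1) (TTimes b b2)"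
| rt_state:    "vtyp s (TSet b) \<Longrightarrow> rtyp (State s) TOne b"
| rt_strength: "rtyp Strength (TTimes b1 (TSet b2)) (TTimes b1 b2)"
| rt_eta:      "rtyp (Eta b) TOne (TTimes b b)"
| rt_eps:      "rtyp Eps (TTimes b b) TOne"

fun big_union :: "val list \<Rightarrow> val" where
  "big_union [] = SEmpty"
| "big_union [s] = s"
| "big_union (s # ss) = SUnion s (big_union ss)"

text \<open>Big-step evaluation: evalS r s t means r @bar s \<mapsto> t, evalV r v t means r @ v \<mapsto> t.\<close>

inductive evalS :: "rel \<Rightarrow> val \<Rightarrow> val \<Rightarrow> bool"
      and evalV :: "rel \<Rightarrow> val \<Rightarrow> val \<Rightarrow> bool" where
  es_empty:  "evalS r SEmpty SEmpty"
| es_single: "evalV r v t \<Longrightarrow> evalS r (SSingle v) t"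
| es_union:  "evalS r s1 t1 \<Longrightarrow> evalS r s2 t2 \<Longrightarrow> evalS r (SUnion s1 s2) (SUnion t1 t2)"
| ev_arr:    "cstep c v v' \<Longrightarrow> evalV (Arr c) v (SSingle v')"
| ev_seq:    "evalV r1 v s \<Longrightarrow> evalS r2 s t \<Longrightarrow> evalV (RSeq r1 r2) v t"
| ev_second: "evalV r v2 s \<Longrightarrow> evalV Strength (VPair v1 s) t \<Longrightarrow> evalV (Second r) (VPair v1 v2) t"
| ev_str_empty:  "evalV Strength (VPair v SEmpty) SEmpty"
| ev_str_single: "evalV Strength (VPair v1 (SSingle v2)) (SSingle (VPair v1 v2))"
| ev_str_union:  "evalV Strength (VPair v s1) t1 \<Longrightarrow> evalV Strength (VPair v s2) t2 \<Longrightarrow>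
                  evalV Strength (VPair v (SUnion s1 s2)) (SUnion t1 t2)"
| ev_state:  "evalV (State s) VUnit s"
| ev_eta:    "set vs = {v. vtyp v b} \<Longrightarrow> distinct vs \<Longrightarrow>
              evalV (Eta b) VUnit (big_union (map (\<lambda>v. SSingle (VPair v v)) vs))"
| ev_eps_eq: "evalV Eps (VPair v v) (SSingle VUnit)"
| ev_eps_ne: "v \<noteq> v' \<Longrightarrow> evalV Eps (VPair v v') SEmpty"

end

theory Submission
  imports Defs
begin

text \<open>Subject reduction, proved by simultaneous rule induction over evaluation of a relation on a
  set and on a single value, with the types generalised; the only case leaving the language of
  relations is \<open>Arr c\<close>, which rests on type preservation for the combinator semantics of \<open>\<Pi>\<close>.\<close>

inductive_cases vtyp_VLeftE: "vtyp (VLeft v) b"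
inductive_cases vtyp_VRightE: "vtyp (VRight v) b"
inductive_cases vtyp_VPairE: "vtyp (VPair v1 v2) b"
inductive_cases vtyp_SSingleE: "vtyp (SSingle v) b"
inductive_cases vtyp_SUnionE: "vtyp (SUnion s1 s2) b"
inductive_cases vtyp_VUnitE: "vtyp VUnit b"
inductive_cases vtyp_VTE: "vtyp VT b"
inductive_cases vtyp_VFE: "vtyp VF b"
inductive_cases ctyp_CSeqE: "ctyp (CSeq c1 c2) b1 b2"
inductive_cases ctyp_CPlusE: "ctyp (CPlus c1 c2) b1 b2"
inductive_cases ctyp_CTimesE: "ctyp (CTimes c1 c2) b1 b2"

lemma cstep_preserves_vtyp:
  assumes "cstep c v v'" and "ctyp c b1 b2" and "vtyp v b1"
  shows "vtyp v' b2"
  using assms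
proof (induction arbitrary: b1 b2 rule: cstep.induct)
  case (cs_seq c1 v v1 c2 v2)
  then show ?case by (blast elim: ctyp_CSeqE)
next
  case (cs_plus1 c1 v v' c2)
  then show ?case by (blast elim: ctyp_CPlusE vtyp_VLeftE intro: vt_left)
next
  case (cs_plus2 c2 v v' c1)
  then show ?case by (blast elim: ctyp_CPlusE vtyp_VRightE intro: vt_right)
next
  case (cs_times c1 v1 v1' c2 v2 v2')
  then show ?case by (blast elim: ctyp_CTimesE vtyp_VPairE intro: vt_pair)
qed (auto elim!: ctyp.cases vtyp_VLeftE vtyp_VRightE vtyp_VPairE vtyp_VUnitE vtyp_VTE vtyp_VFE intro: vtyp.intros)

lemma vtyp_big_union:
  assumes "\<And>s. s \<in> set ss \<Longrightarrow> vtyp s (TSet b)"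
  shows "vtyp (big_union ss) (TSet b)"
  using assms by (induction ss rule: big_union.induct) (auto intro: vtyp.intros)

inductive_cases rtyp_ArrE: "rtyp (Arr c) b1 b2"
inductive_cases rtyp_RSeqE: "rtyp (RSeq r1 r2) b1 b2"
inductive_cases rtyp_SecondE: "rtyp (Second r) b1 b2"
inductive_cases rtyp_StrengthE: "rtyp Strength b1 b2"
inductive_cases rtyp_StateE: "rtyp (State s) b1 b2"
inductive_cases rtyp_EtaE: "rtyp (Eta b) b1 b2"
inductive_cases rtyp_EpsE: "rtyp Eps b1 b2"

lemma evalS_evalV_preserve_vtyp:
  shows "evalS r s t \<Longrightarrow> rtyp r b1 b2 \<Longrightarrow> vtyp s (TSet b1) \<Longrightarrow> vtyp t (TSet b2)"
    and "evalV r v t \<Longrightarrow> rtyp r b1 b2 \<Longrightarrow> vtyp v b1 \<Longrightarrow> vtyp t (TSet b2)"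
proof (induction arbitrary: b1 b2 and b1 b2 rule: evalS_evalV.inducts)
  case (es_single r v t)
  then show ?case by (blast elim: vtyp_SSingleE)
next
  case (es_union r s1 t1 s2 t2)
  then show ?case by (blast elim: vtyp_SUnionE intro: vt_union)
next
  case (ev_arr c v v')
  then show ?case by (blast elim: rtyp_ArrE intro: vt_single cstep_preserves_vtyp)
next
  case (ev_seq r1 v s r2 t)
  then show ?case by (blast elim: rtyp_RSeqE)
next
  case (ev_second r v2 s v1 t)
  then show ?case by (blast elim: rtyp_SecondE vtyp_VPairE intro: vt_pair rt_strength)
next
  case (ev_str_single v1 v2)
  then show ?case by (blast elim: rtyp_StrengthE vtyp_VPairE vtyp_SSingleE intro: vt_single vt_pair)
next
  case (ev_str_union v s1 t1 s2 t2)
  then show ?case by (blast elim: rtyp_StrengthE vtyp_VPairE vtyp_SUnionE intro: vt_union vt_pair)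
next
  case (ev_state s)
  then show ?case by (blast elim: rtyp_StateE)
next
  case (ev_eta vs b)
  then show ?case by (auto elim!: rtyp_EtaE intro!: vtyp_big_union vt_single vt_pair)
next
  case (ev_eps_eq v)
  then show ?case by (blast elim: rtyp_EpsE intro: vt_single vt_unit)
qed (rule vt_empty)+

theorem proposition2:
  assumes "rtyp r b1 b2"
    and "vtyp s (TSet b1)"
    and "evalS r s t"
  shows "vtyp t (TSet b2)"
  using evalS_evalV_preserve_vtyp(1)[OF assms(3,1,2)] .

end
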